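(* Let $f,g$ be real analytic functions on $[-1,1]$ and consider the Abel equation $$x'(t)=f(t)x^3+g(t)x^2,\qquad t\in[-1,1].$$ If this equation has a center at $x=0$, then $$m_k=\int_{-1}^1 f(t)\,(G(t))^k\,dt=0,\qquad k=0,1,2,$$ where $G(t)=\int_{-1}^t g(s)\,ds$.
   Context: The Abel equation $x'=f(t)x^3+g(t)x^2$ on $[-1,1]$ (with $x$ real) is said to have a center at $x=0$ if every solution $x(t)$ whose initial value $x(-1)$ is small enough in absolute value is defined on $[-1,1]$ and satisfies $x(-1)=x(1)$. *)

theory Defs
  imports "HOL-Analysis.Analysis"
begin

definition real_analytic_on :: "(real \<Rightarrow> real) \<Rightarrow> real set \<Rightarrow> bool" where
  "real_analytic_on f S \<longleftrightarrow>
     (\<forall>x0\<in>S. \<exists>r>0. \<exists>a::nat \<Rightarrow> real.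
        \<forall>y\<in>S. \<bar>y - x0\<bar> < r \<longrightarrow> (\<lambda>n. a n * (y - x0) ^ n) sums f y)"

definition abel_solution :: "(real \<Rightarrow> real) \<Rightarrow> (real \<Rightarrow> real) \<Rightarrow> (real \<Rightarrow> real) \<Rightarrow> bool" where
  "abel_solution f g x \<longleftrightarrow>
     (\<forall>t\<in>{-1..1}. (x has_real_derivative (f t * (x t) ^ 3 + g t * (x t) ^ 2))
                     (at t within {-1..1}))"

definition abel_center :: "(real \<Rightarrow> real) \<Rightarrow> (real \<Rightarrow> real) \<Rightarrow> bool" where
  "abel_center f g \<longleftrightarrow>
     (\<exists>\<delta>>0. \<forall>x0. \<bar>x0\<bar> < \<delta> \<longrightarrow>
        (\<exists>x. abel_solution f g x \<and> x (-1) = x0) \<and>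
        (\<forall>x. abel_solution f g x \<and> x (-1) = x0 \<longrightarrow> x 1 = x (-1)))"

end

(* For x(-1) = e > 0 small the solution stays within O(e^2) of e, so it is positive and
   its reciprocal solves the linear equation (1/x)' = -g - f x.  Hence
   1/x = 1/e - S with S = G + H and H(t) = \<integral>_{-1}^t f x, i.e. x = e + e S x, and the
   center condition x(1) = x(-1) reads G(1) + H(1) = 0.  Feeding x = e + e S x back into
   H(1) shows in turn that G(1), m_0, m_1 and m_2 are O(e), each step using that the previous
   ones vanish; since e can be taken arbitrarily small, all of them are zero. *)
theory Submission
  imports Defs
begin

lemma real_analytic_on_imp_continuous_on:
  assumes "real_analytic_on f S"
  shows "continuous_on S f"
  unfolding continuous_on_eq_continuous_within
proof
  fix x0 assume x0: "x0 \<in> S"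
  with assms obtain r a where r: "r > 0"
    and sums: "\<And>y. y \<in> S \<Longrightarrow> dist y x0 < r \<Longrightarrow> (\<lambda>n. a n * (y - x0) ^ n) sums f y"
    unfolding real_analytic_on_def dist_real_def by blast
  show "continuous (at x0 within S) f"
  proof (cases "x0 islimpt S")
    case False
    then show ?thesis
      by (simp add: continuous_trivial_limit trivial_limit_within)
  next
    case True
    then obtain y where y: "y \<in> S" "y \<noteq> x0" "dist y x0 < r"
      using r islimpt_approachable by blast
    then have "summable (\<lambda>n. a n * (y - x0) ^ n)"
      using sums sums_summable by blast
    then have "isCont (\<lambda>z. \<Sum>n. a n * z ^ n) 0"
      by (rule isCont_powser) (use y in simp)
    moreover have "isCont (\<lambda>y. y - x0) x0"
      by simp
    ultimately have "isCont (\<lambda>y. \<Sum>n. a n * (y - x0) ^ n) x0"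
      using isCont_o2 by fastforce
    then have "continuous (at x0 within S) (\<lambda>y. \<Sum>n. a n * (y - x0) ^ n)"
      by (rule continuous_at_imp_continuous_within)
    then show ?thesis
      by (rule continuous_transform_within[OF _ r x0]) (use sums sums_unique in metis)
  qed
qed

lemma continuous_on_Icc_less_induct:
  fixes u :: "real \<Rightarrow> real"
  assumes cont: "continuous_on {a..b} u" and start: "u a < c"
    and step: "\<And>t. t \<in> {a..b} \<Longrightarrow> (\<And>s. s \<in> {a..t} \<Longrightarrow> u s \<le> c) \<Longrightarrow> u t < c"
    and t: "t \<in> {a..b}"
  shows "u t < c"
proof (rule ccontr)
  assume "\<not> u t < c"
  then obtain t0 where "t0 \<in> {a..t}" "u t0 = c"
    using IVT'[of u a c t] start t continuous_on_subset[OF cont] by fastforce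
  define T where "T = {s \<in> {a..b}. u s = c}"
  have "t0 \<in> T"
    using \<open>t0 \<in> {a..t}\<close> \<open>u t0 = c\<close> t by (auto simp: T_def)
  then have "T \<noteq> {}"
    by blast
  moreover have "bdd_below T"
    by (auto simp: T_def intro: bdd_belowI)
  moreover have "closed ({a..b} \<inter> u -` {c})"
    by (intro continuous_closed_preimage cont) auto
  then have "closed T"
    by (simp add: T_def Int_def)
  ultimately have first: "Inf T \<in> T"
    by (rule closed_contains_Inf)
  have "u s \<le> c" if s: "s \<in> {a..Inf T}" for s
  proof (rule ccontr)
    assume "\<not> u s \<le> c"
    then obtain s' where "s' \<in> {a..s}" "u s' = c"
      using IVT'[of u a c s] start s first continuous_on_subset[OF cont]
      by (force simp: T_def)
    then have "s' \<in> T"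
      using s first by (auto simp: T_def)
    then have "Inf T \<le> s'"
      using \<open>bdd_below T\<close> by (rule cInf_lower)
    then have "s' = s"
      using \<open>s' \<in> {a..s}\<close> s by auto
    then show False
      using \<open>u s' = c\<close> \<open>\<not> u s \<le> c\<close> by simp
  qed
  then have "u (Inf T) < c"
    using first by (intro step) (auto simp: T_def)
  then show False
    using first by (simp add: T_def)
qed

lemma abs_mult_le: "\<bar>a\<bar> \<le> A \<Longrightarrow> \<bar>b\<bar> \<le> B \<Longrightarrow> \<bar>a * b\<bar> \<le> A * (B :: real)"
  by (metis abs_ge_zero abs_mult mult_mono order_trans)

lemma abel_solution_near_initial_value:
  fixes f g x :: "real \<Rightarrow> real"
  assumes bound_f: "\<And>t. t \<in> {-1..1} \<Longrightarrow> \<bar>f t\<bar> \<le> M"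
    and bound_g: "\<And>t. t \<in> {-1..1} \<Longrightarrow> \<bar>g t\<bar> \<le> M"
    and solution: "abel_solution f g x" and initial: "x (-1) = e"
    and e: "0 < e" "e \<le> 1" "48 * M * e \<le> 1"
    and t: "t \<in> {-1..1}"
  shows "\<bar>x t - e\<bar> \<le> 24 * M * e\<^sup>2"
proof -
  define D where "D t = f t * x t ^ 3 + g t * x t ^ 2" for t
  have der: "(x has_real_derivative D t) (at t within {-1..1})" if "t \<in> {-1..1}" for t
    using solution that unfolding abel_solution_def D_def by blast
  have "0 \<le> M"
    using bound_f[of 0] by simp
  have abs_D_le: "\<bar>D t\<bar> \<le> 12 * M * e\<^sup>2" if "t \<in> {-1..1}" "\<bar>x t\<bar> \<le> 2 * e" for t
  proof -
    have "\<bar>x t ^ 3\<bar> \<le> (2 * e) ^ 3"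
      unfolding power_abs by (rule power_mono) (use that(2) in auto)
    moreover have "\<bar>x t ^ 2\<bar> \<le> (2 * e) ^ 2"
      unfolding power_abs by (rule power_mono) (use that(2) in auto)
    ultimately have "\<bar>D t\<bar> \<le> M * (2 * e) ^ 3 + M * (2 * e) ^ 2"
      unfolding D_def using bound_f[OF that(1)] bound_g[OF that(1)]
      by (intro abs_triangle_ineq[THEN order_trans] add_mono abs_mult_le)
    also have "\<dots> = M * e\<^sup>2 * (8 * e + 4)"
      by (simp add: algebra_simps power2_eq_square power3_eq_cube)
    also have "\<dots> \<le> M * e\<^sup>2 * 12"
      using e \<open>0 \<le> M\<close> by (intro mult_left_mono) auto
    finally show ?thesis
      by simp
  qed
  have drift: "\<bar>x t - e\<bar> \<le> 24 * M * e\<^sup>2"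
    if t: "t \<in> {-1..1}" and small: "\<And>s. s \<in> {-1..t} \<Longrightarrow> \<bar>x s\<bar> \<le> 2 * e" for t
  proof -
    have "norm (x t - x (-1)) \<le> 12 * M * e\<^sup>2 * norm (t - (-1))"
      using t by (intro field_differentiable_bound[where S = "{-1..t}" and f' = D])
        (auto intro!: DERIV_subset[OF der] abs_D_le small)
    also have "\<dots> \<le> 12 * M * e\<^sup>2 * 2"
      using t \<open>0 \<le> M\<close> by (intro mult_left_mono) auto
    finally show ?thesis
      using initial by simp
  qed
  have "24 * M * e\<^sup>2 \<le> e / 2"
    using mult_right_mono[OF e(3), of e] e(1) by (simp add: power2_eq_square algebra_simps)
  have "\<bar>x s\<bar> < 2 * e" if "s \<in> {-1..1}" for s
  proof (rule continuous_on_Icc_less_induct[OF _ _ _ that])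
    show "continuous_on {-1..1} (\<lambda>t. \<bar>x t\<bar>)"
      by (intro continuous_on_rabs DERIV_continuous_on[where D = D]) (rule der)
    show "\<bar>x (-1)\<bar> < 2 * e"
      using initial e by simp
  next
    fix t assume "t \<in> {-1..1}" "\<And>s. s \<in> {-1..t} \<Longrightarrow> \<bar>x s\<bar> \<le> 2 * e"
    then have "\<bar>x t - e\<bar> \<le> e / 2"
      using drift \<open>24 * M * e\<^sup>2 \<le> e / 2\<close> by fastforce
    then show "\<bar>x t\<bar> < 2 * e"
      using e by linarith
  qed
  then show ?thesis
    by (rule drift[OF t, OF less_imp_le]) (use t in auto)
qed

lemma continuous_on_indefinite_integral [continuous_intros]:
  fixes h :: "real \<Rightarrow> 'a::banach"
  shows "continuous_on {a..b} h \<Longrightarrow> continuous_on {a..b} (\<lambda>t. integral {a..t} h)"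
  by (rule indefinite_integral_continuous_1[OF integrable_continuous_interval])

lemma integral_add_continuous:
  fixes h k :: "real \<Rightarrow> real"
  assumes "continuous_on {a..b} h" "continuous_on {a..b} k" "c \<in> {a..b}"
  shows "integral {a..c} (\<lambda>s. h s + k s) = integral {a..c} h + integral {a..c} k"
  by (intro integral_add integrable_continuous_interval
      continuous_on_subset[OF assms(1)] continuous_on_subset[OF assms(2)]) (use assms(3) in auto)

lemma abs_integral_le:
  fixes h :: "real \<Rightarrow> real"
  assumes "continuous_on {a..b} h" "\<And>s. s \<in> {a..b} \<Longrightarrow> \<bar>h s\<bar> \<le> B" "c \<in> {a..b}"
  shows "\<bar>integral {a..c} h\<bar> \<le> B * (b - a)"
proof -
  have "0 \<le> B"
    using assms(2)[of a] assms(3) by force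
  have "norm (integral {a..c} h) \<le> B * (c - a)"
    using assms by (intro integral_bound) (auto intro: continuous_on_subset)
  also have "\<dots> \<le> B * (b - a)"
    using \<open>0 \<le> B\<close> assms(3) by (intro mult_left_mono) auto
  finally show ?thesis
    by simp
qed

lemma integral_mult_indefinite_integral:
  fixes h :: "real \<Rightarrow> real"
  assumes "continuous_on {a..b} h" "a \<le> b"
  shows "integral {a..b} (\<lambda>t. h t * integral {a..t} h) = (integral {a..b} h)\<^sup>2 / 2"
proof -
  have "((\<lambda>t. h t * integral {a..t} h) has_integral
      (integral {a..b} h)\<^sup>2 / 2 - (integral {a..a} h)\<^sup>2 / 2) {a..b}"
  proof (rule fundamental_theorem_of_calculus[OF assms(2)])
    fix t assume t: "t \<in> {a..b}"
    have "((\<lambda>t. integral {a..t} h) has_real_derivative h t) (at t within {a..b})"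
      by (rule integral_has_real_derivative[OF assms(1) t])
    then have "((\<lambda>t. integral {a..t} h * integral {a..t} h / 2) has_real_derivative
        (h t * integral {a..t} h + h t * integral {a..t} h) / 2) (at t within {a..b})"
      by (intro DERIV_cdivide DERIV_mult)
    then show "((\<lambda>t. (integral {a..t} h)\<^sup>2 / 2) has_vector_derivative h t * integral {a..t} h)
        (at t within {a..b})"
      by (simp add: power2_eq_square mult.commute has_real_derivative_iff_has_vector_derivative[symmetric])
  qed
  then show ?thesis
    by (simp add: integral_unique)
qed

definition abel_moment :: "(real \<Rightarrow> real) \<Rightarrow> (real \<Rightarrow> real) \<Rightarrow> nat \<Rightarrow> real" where
  "abel_moment f g k = integral {-1..1} (\<lambda>t. f t * (integral {-1..t} g) ^ k)"

locale abel_periodic_solution =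
  fixes f g x :: "real \<Rightarrow> real" and M e :: real
  assumes continuous_f [continuous_intros]: "continuous_on {-1..1} f"
    and continuous_g [continuous_intros]: "continuous_on {-1..1} g"
    and bound_f: "\<And>t. t \<in> {-1..1} \<Longrightarrow> \<bar>f t\<bar> \<le> M"
    and bound_g: "\<And>t. t \<in> {-1..1} \<Longrightarrow> \<bar>g t\<bar> \<le> M"
    and solution: "abel_solution f g x"
    and initial: "x (-1) = e" and periodic: "x 1 = e"
    and e_pos: "0 < e" and e_le: "e \<le> 1/4" and e_small: "48 * M * e \<le> 1"
begin

abbreviation G :: "real \<Rightarrow> real" where "G t \<equiv> integral {-1..t} g"
abbreviation F :: "real \<Rightarrow> real" where "F t \<equiv> integral {-1..t} f"
abbreviation H :: "real \<Rightarrow> real" where "H t \<equiv> integral {-1..t} (\<lambda>s. f s * x s)"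
abbreviation S :: "real \<Rightarrow> real" where "S t \<equiv> G t + H t"

lemma M_nonneg: "0 \<le> M"
  using bound_f[of 0] by simp

lemma continuous_x [continuous_intros]: "continuous_on {-1..1} x"
  using solution unfolding abel_solution_def by (intro DERIV_continuous_on) auto

lemma x_near_e: "t \<in> {-1..1} \<Longrightarrow> \<bar>x t - e\<bar> \<le> 24 * M * e\<^sup>2"
  using e_pos e_le e_small
  by (intro abel_solution_near_initial_value[OF bound_f bound_g solution initial]) auto

lemma x_near_e_half: "t \<in> {-1..1} \<Longrightarrow> \<bar>x t - e\<bar> \<le> e / 2"
proof -
  have "24 * M * e\<^sup>2 \<le> e / 2"
    using mult_right_mono[OF e_small, of e] e_pos by (simp add: power2_eq_square algebra_simps)
  then show "t \<in> {-1..1} \<Longrightarrow> \<bar>x t - e\<bar> \<le> e / 2"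
    using x_near_e[of t] by linarith
qed

lemma x_pos: "t \<in> {-1..1} \<Longrightarrow> 0 < x t"
  using x_near_e_half[of t] e_pos by linarith

lemma abs_x_le: "t \<in> {-1..1} \<Longrightarrow> \<bar>x t\<bar> \<le> 2 * e"
  using x_near_e_half[of t] e_pos by linarith

lemma abs_integral_f_mult_le:
  assumes "continuous_on {-1..1} h" "\<And>t. t \<in> {-1..1} \<Longrightarrow> \<bar>h t\<bar> \<le> B" "t \<in> {-1..1}"
  shows "\<bar>integral {-1..t} (\<lambda>s. f s * h s)\<bar> \<le> 2 * M * B"
proof -
  have "\<bar>integral {-1..t} (\<lambda>s. f s * h s)\<bar> \<le> M * B * (1 - -1)"
    using assms bound_f by (intro abs_integral_le) (auto intro!: continuous_intros abs_mult_le)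
  then show ?thesis
    by simp
qed

lemma abs_G_le: "t \<in> {-1..1} \<Longrightarrow> \<bar>G t\<bar> \<le> 2 * M"
  using abs_integral_le[OF continuous_g bound_g, of t] by simp

lemma abs_H_le: "t \<in> {-1..1} \<Longrightarrow> \<bar>H t\<bar> \<le> 4 * M * e"
  using abs_integral_f_mult_le[OF continuous_x abs_x_le, of t] by simp

lemma abs_S_le: "t \<in> {-1..1} \<Longrightarrow> \<bar>S t\<bar> \<le> 3 * M"
  using abs_G_le abs_H_le mult_left_mono[OF e_le M_nonneg] by fastforce

lemma abs_S_sq_le: "t \<in> {-1..1} \<Longrightarrow> \<bar>S t ^ 2\<bar> \<le> 9 * M\<^sup>2"
  using abs_mult_le[OF abs_S_le abs_S_le, of t t] by (simp add: power2_eq_square)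

lemma inverse_x_eq: "t \<in> {-1..1} \<Longrightarrow> inverse (x t) = inverse e - S t"
proof -
  have "\<exists>c. \<forall>t\<in>{-1..1}. inverse (x t) + S t = c"
  proof (rule has_field_derivative_zero_constant)
    fix t :: real assume t: "t \<in> {-1..1}"
    define D where "D = f t * x t ^ 3 + g t * x t ^ 2"
    have "(x has_real_derivative D) (at t within {-1..1})"
      using solution t unfolding abel_solution_def D_def by blast
    then have "((\<lambda>t. inverse (x t) + S t) has_real_derivative
        - (D * inverse (x t ^ Suc (Suc 0))) + (g t + f t * x t)) (at t within {-1..1})"
      using x_pos[OF t] t
      by (intro DERIV_add DERIV_inverse_fun integral_has_real_derivative continuous_intros) auto
    moreover have "- (D * inverse (x t ^ Suc (Suc 0))) + (g t + f t * x t) = 0"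
      using x_pos[OF t] by (simp add: D_def field_simps power2_eq_square power3_eq_cube)
    ultimately show "((\<lambda>t. inverse (x t) + S t) has_real_derivative 0) (at t within {-1..1})"
      by simp
  qed simp
  then obtain c where c: "\<And>t. t \<in> {-1..1} \<Longrightarrow> inverse (x t) + S t = c"
    by blast
  have "c = inverse e"
    using c[of "-1"] initial by simp
  then show "t \<in> {-1..1} \<Longrightarrow> inverse (x t) = inverse e - S t"
    using c by (simp add: eq_diff_eq)
qed

lemma x_eq:
  assumes "t \<in> {-1..1}"
  shows "x t = e + e * (S t * x t)"
proof -
  have "e * (x t * inverse (x t)) = e"
    using x_pos[OF assms] by simp
  then have "e * (x t * (inverse e - S t)) = e"
    using inverse_x_eq[OF assms] by simp
  then have "e * x t = e * (e + e * (S t * x t))"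
    using e_pos by (simp add: field_simps)
  then show ?thesis
    using e_pos by simp
qed

lemma G_1_plus_H_1: "G 1 + H 1 = 0"
  using inverse_x_eq[of 1] periodic by simp

lemma abs_G_1_le: "\<bar>G 1\<bar> \<le> 4 * M * e"
  using G_1_plus_H_1 abs_H_le[of 1] by simp

lemma H_1_eq: "H 1 = e * (F 1 + integral {-1..1} (\<lambda>t. f t * (S t * x t)))"
proof -
  have "H 1 = integral {-1..1} (\<lambda>t. e * f t + e * (f t * (S t * x t)))"
    by (rule integral_cong) (subst x_eq, auto simp: algebra_simps)
  also have "\<dots> = integral {-1..1} (\<lambda>t. e * f t) + integral {-1..1} (\<lambda>t. e * (f t * (S t * x t)))"
    by (rule integral_add_continuous[of "-1" 1]) (auto intro!: continuous_intros)
  finally show ?thesis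
    by (simp only: integral_mult_right distrib_left[symmetric])
qed

lemma moment_0_bound:
  assumes "G 1 = 0"
  shows "\<bar>abel_moment f g 0\<bar> \<le> 12 * M\<^sup>2 * e"
proof -
  have "F 1 = - integral {-1..1} (\<lambda>t. f t * (S t * x t))"
    using H_1_eq G_1_plus_H_1 assms e_pos by simp
  moreover have "\<bar>integral {-1..1} (\<lambda>t. f t * (S t * x t))\<bar> \<le> 2 * M * (3 * M * (2 * e))"
    by (intro abs_integral_f_mult_le abs_mult_le abs_S_le abs_x_le continuous_intros) auto
  ultimately show ?thesis
    by (simp add: abel_moment_def power2_eq_square)
qed

lemma integral_f_S_x_eq:
  "integral {-1..1} (\<lambda>t. f t * (S t * x t)) =
     e * (integral {-1..1} (\<lambda>t. f t * S t) + integral {-1..1} (\<lambda>t. f t * (S t ^ 2 * x t)))"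
proof -
  have "integral {-1..1} (\<lambda>t. f t * (S t * x t)) =
      integral {-1..1} (\<lambda>t. e * (f t * S t) + e * (f t * (S t ^ 2 * x t)))"
    by (rule integral_cong) (subst x_eq, auto simp: algebra_simps power2_eq_square)
  also have "\<dots> = integral {-1..1} (\<lambda>t. e * (f t * S t)) + integral {-1..1} (\<lambda>t. e * (f t * (S t ^ 2 * x t)))"
    by (rule integral_add_continuous[of "-1" 1]) (auto intro!: continuous_intros)
  finally show ?thesis
    by (simp only: integral_mult_right distrib_left[symmetric])
qed

lemma integral_f_S_eq:
  assumes "G 1 = 0" "abel_moment f g 0 = 0"
  shows "integral {-1..1} (\<lambda>t. f t * S t) = - integral {-1..1} (\<lambda>t. f t * (S t ^ 2 * x t))"
proof -
  have "integral {-1..1} (\<lambda>t. f t * (S t * x t)) = 0"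
    using H_1_eq G_1_plus_H_1 assms e_pos by (simp add: abel_moment_def)
  then show ?thesis
    using integral_f_S_x_eq e_pos by simp
qed

lemma integral_f_S_eq_moment_1:
  "integral {-1..1} (\<lambda>t. f t * S t) = abel_moment f g 1 + integral {-1..1} (\<lambda>t. f t * H t)"
  unfolding abel_moment_def distrib_left power_one_right
  by (rule integral_add_continuous[of "-1" 1]) (auto intro!: continuous_intros)

lemma moment_1_bound:
  assumes "G 1 = 0" "abel_moment f g 0 = 0"
  shows "\<bar>abel_moment f g 1\<bar> \<le> (8 * M\<^sup>2 + 36 * M ^ 3) * e"
proof -
  have "abel_moment f g 1 =
      - integral {-1..1} (\<lambda>t. f t * H t) - integral {-1..1} (\<lambda>t. f t * (S t ^ 2 * x t))"
    using integral_f_S_eq[OF assms] integral_f_S_eq_moment_1 by simp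
  moreover have "\<bar>integral {-1..1} (\<lambda>t. f t * H t)\<bar> \<le> 2 * M * (4 * M * e)"
    by (intro abs_integral_f_mult_le abs_H_le continuous_intros) auto
  moreover have "\<bar>integral {-1..1} (\<lambda>t. f t * (S t ^ 2 * x t))\<bar> \<le> 2 * M * (9 * M\<^sup>2 * (2 * e))"
    by (intro abs_integral_f_mult_le abs_mult_le abs_S_sq_le abs_x_le continuous_intros) auto
  ultimately show ?thesis
    by (simp add: algebra_simps power2_eq_square power3_eq_cube)
qed

lemma H_eq:
  assumes "t \<in> {-1..1}"
  shows "H t = e * F t + integral {-1..t} (\<lambda>s. f s * (x s - e))"
proof -
  have "H t = integral {-1..t} (\<lambda>s. e * f s + f s * (x s - e))"
    by (simp add: algebra_simps)
  also have "\<dots> = integral {-1..t} (\<lambda>s. e * f s) + integral {-1..t} (\<lambda>s. f s * (x s - e))"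
    using assms by (intro integral_add_continuous[of "-1" 1]) (auto intro!: continuous_intros)
  finally show ?thesis
    by simp
qed

lemma integral_f_H_eq:
  "integral {-1..1} (\<lambda>t. f t * H t) =
     e * (F 1)\<^sup>2 / 2 + integral {-1..1} (\<lambda>t. f t * integral {-1..t} (\<lambda>s. f s * (x s - e)))"
proof -
  have "integral {-1..1} (\<lambda>t. f t * H t) =
      integral {-1..1} (\<lambda>t. e * (f t * F t) + f t * integral {-1..t} (\<lambda>s. f s * (x s - e)))"
    by (rule integral_cong) (subst H_eq, auto simp: algebra_simps)
  also have "\<dots> = integral {-1..1} (\<lambda>t. e * (f t * F t))
      + integral {-1..1} (\<lambda>t. f t * integral {-1..t} (\<lambda>s. f s * (x s - e)))"
    by (rule integral_add_continuous[of "-1" 1]) (auto intro!: continuous_intros)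
  finally show ?thesis
    using integral_mult_indefinite_integral[OF continuous_f] by simp
qed

lemma integral_f_S_sq_x_eq:
  "integral {-1..1} (\<lambda>t. f t * (S t ^ 2 * x t)) =
     e * abel_moment f g 2 + e * integral {-1..1} (\<lambda>t. f t * (H t * (S t + G t)))
       + integral {-1..1} (\<lambda>t. f t * (S t ^ 2 * (x t - e)))"
proof -
  have "integral {-1..1} (\<lambda>t. f t * (S t ^ 2 * x t)) =
      integral {-1..1} (\<lambda>t. (e * (f t * G t ^ 2) + e * (f t * (H t * (S t + G t))))
        + f t * (S t ^ 2 * (x t - e)))"
    by (rule integral_cong) (simp add: algebra_simps power2_eq_square)
  also have "\<dots> = integral {-1..1} (\<lambda>t. e * (f t * G t ^ 2) + e * (f t * (H t * (S t + G t))))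
      + integral {-1..1} (\<lambda>t. f t * (S t ^ 2 * (x t - e)))"
    by (rule integral_add_continuous[of "-1" 1]) (auto intro!: continuous_intros)
  also have "integral {-1..1} (\<lambda>t. e * (f t * G t ^ 2) + e * (f t * (H t * (S t + G t)))) =
      integral {-1..1} (\<lambda>t. e * (f t * G t ^ 2)) + integral {-1..1} (\<lambda>t. e * (f t * (H t * (S t + G t))))"
    by (rule integral_add_continuous[of "-1" 1]) (auto intro!: continuous_intros)
  finally show ?thesis
    by (simp add: abel_moment_def)
qed

lemma moment_2_bound:
  assumes "G 1 = 0" "abel_moment f g 0 = 0" "abel_moment f g 1 = 0"
  shows "\<bar>abel_moment f g 2\<bar> \<le> (136 * M ^ 3 + 432 * M ^ 4) * e"
proof -
  define R where "R t = integral {-1..t} (\<lambda>s. f s * (x s - e))" for t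
  have abs_R_le: "\<bar>R t\<bar> \<le> 2 * M * (24 * M * e\<^sup>2)" if "t \<in> {-1..1}" for t
    unfolding R_def using that x_near_e by (intro abs_integral_f_mult_le continuous_intros) auto
  have abs_S_plus_G_le: "\<bar>S t + G t\<bar> \<le> 5 * M" if "t \<in> {-1..1}" for t
    using abs_S_le[OF that] abs_G_le[OF that] by linarith
  have "F 1 = 0"
    using assms(2) by (simp add: abel_moment_def)
  then have m2_eq: "e * abel_moment f g 2 = - integral {-1..1} (\<lambda>t. f t * R t)
      - e * integral {-1..1} (\<lambda>t. f t * (H t * (S t + G t)))
      - integral {-1..1} (\<lambda>t. f t * (S t ^ 2 * (x t - e)))"
    using integral_f_S_eq[OF assms(1,2)] integral_f_S_eq_moment_1 assms(3)
      integral_f_H_eq integral_f_S_sq_x_eq unfolding R_def by simp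
  have "\<bar>integral {-1..1} (\<lambda>t. f t * R t)\<bar> \<le> 2 * M * (2 * M * (24 * M * e\<^sup>2))"
    unfolding R_def by (rule abs_integral_f_mult_le)
      (use abs_R_le[unfolded R_def] in \<open>auto intro!: continuous_intros\<close>)
  moreover have "\<bar>integral {-1..1} (\<lambda>t. f t * (H t * (S t + G t)))\<bar> \<le> 2 * M * (4 * M * e * (5 * M))"
    by (intro abs_integral_f_mult_le abs_mult_le abs_H_le abs_S_plus_G_le continuous_intros) auto
  then have "\<bar>e * integral {-1..1} (\<lambda>t. f t * (H t * (S t + G t)))\<bar> \<le> e * (2 * M * (4 * M * e * (5 * M)))"
    using e_pos by (simp add: abs_mult mult_left_mono)
  moreover have "\<bar>integral {-1..1} (\<lambda>t. f t * (S t ^ 2 * (x t - e)))\<bar> \<le> 2 * M * (9 * M\<^sup>2 * (24 * M * e\<^sup>2))"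
    by (intro abs_integral_f_mult_le abs_mult_le abs_S_sq_le x_near_e continuous_intros) auto
  ultimately have "\<bar>e * abel_moment f g 2\<bar> \<le> 2 * M * (2 * M * (24 * M * e\<^sup>2))
      + e * (2 * M * (4 * M * e * (5 * M))) + 2 * M * (9 * M\<^sup>2 * (24 * M * e\<^sup>2))"
    unfolding m2_eq by linarith
  also have "\<dots> = e * ((136 * M ^ 3 + 432 * M ^ 4) * e)"
    by (simp add: algebra_simps power2_eq_square power3_eq_cube power4_eq_xxxx)
  finally show ?thesis
    using e_pos by (simp add: abs_mult)
qed

end

lemma eq_0_if_abs_le_linear:
  fixes a K d :: real
  assumes "0 < d" and bound: "\<And>e. 0 < e \<Longrightarrow> e < d \<Longrightarrow> \<bar>a\<bar> \<le> K * e"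
  shows "a = 0"
proof -
  have "((\<lambda>e. K * e) \<longlongrightarrow> K * 0) (at_right 0)"
    by (intro tendsto_intros)
  moreover have "eventually (\<lambda>e. \<bar>a\<bar> \<le> K * e) (at_right 0)"
    unfolding eventually_at_right_field using assms by blast
  ultimately have "\<bar>a\<bar> \<le> K * 0"
    by (rule tendsto_lowerbound) simp
  then show ?thesis
    by simp
qed

lemma abel_center_imp_periodic_solutions:
  assumes "abel_center f g"
    and "continuous_on {-1..1} f" "continuous_on {-1..1} g"
    and bound_f: "\<And>t. t \<in> {-1..1} \<Longrightarrow> \<bar>f t\<bar> \<le> M"
    and "\<And>t. t \<in> {-1..1} \<Longrightarrow> \<bar>g t\<bar> \<le> M"
  obtains d where "0 < d" "\<And>e. 0 < e \<Longrightarrow> e < d \<Longrightarrow> \<exists>x. abel_periodic_solution f g x M e"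
proof -
  obtain \<delta> where "0 < \<delta>" and center: "\<And>x0. \<bar>x0\<bar> < \<delta> \<Longrightarrow>
      (\<exists>x. abel_solution f g x \<and> x (-1) = x0) \<and>
      (\<forall>x. abel_solution f g x \<and> x (-1) = x0 \<longrightarrow> x 1 = x (-1))"
    using assms(1) unfolding abel_center_def by blast
  have "0 \<le> M"
    using bound_f[of 0] by simp
  define d where "d = min \<delta> (min (1/4) (1 / (48 * (M + 1))))"
  show ?thesis
  proof (rule that)
    show "0 < d"
      using \<open>0 < \<delta>\<close> \<open>0 \<le> M\<close> by (simp add: d_def)
  next
    fix e :: real assume e: "0 < e" "e < d"
    then obtain x where "abel_solution f g x" "x (-1) = e" "x 1 = e"
      using center[of e] by (auto simp: d_def)
    moreover have "48 * M * e \<le> 1"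
    proof -
      have "48 * M * e \<le> 48 * (M + 1) * e"
        using e by (intro mult_right_mono) auto
      also have "\<dots> < 1"
        using e \<open>0 \<le> M\<close> by (simp add: d_def field_simps)
      finally show ?thesis
        by simp
    qed
    ultimately show "\<exists>x. abel_periodic_solution f g x M e"
      using assms e by (intro exI[of _ x]) (unfold_locales, auto simp: d_def)
  qed
qed

theorem theorem1:
  fixes f g :: "real \<Rightarrow> real"
  assumes "real_analytic_on f {-1..1}" and "real_analytic_on g {-1..1}"
    and "abel_center f g"
  shows "\<forall>k\<in>{0,1,2::nat}.
           integral {-1..1} (\<lambda>t. f t * (integral {-1..t} g) ^ k) = 0"
proof -
  have cont: "continuous_on {-1..1} f" "continuous_on {-1..1} g"
    using assms(1,2) by (auto intro: real_analytic_on_imp_continuous_on)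
  have "continuous_on {-1..1} (\<lambda>t. \<bar>f t\<bar> + \<bar>g t\<bar>)"
    using cont by (intro continuous_intros)
  then obtain M where "\<And>t. t \<in> {-1..1} \<Longrightarrow> norm (\<bar>f t\<bar> + \<bar>g t\<bar>) \<le> M"
    using continuous_on_compact_bound[OF compact_Icc] by blast
  then have "\<And>t. t \<in> {-1..1} \<Longrightarrow> \<bar>f t\<bar> \<le> M" "\<And>t. t \<in> {-1..1} \<Longrightarrow> \<bar>g t\<bar> \<le> M"
    by fastforce+
  then obtain d where "0 < d" and periodic:
    "\<And>e. 0 < e \<Longrightarrow> e < d \<Longrightarrow> \<exists>x. abel_periodic_solution f g x M e"
    using abel_center_imp_periodic_solutions[OF assms(3) cont] by blast
  have G_1: "integral {-1..1} g = 0"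
    using periodic abel_periodic_solution.abs_G_1_le by (blast intro: eq_0_if_abs_le_linear[OF \<open>0 < d\<close>])
  have m0: "abel_moment f g 0 = 0"
    using periodic abel_periodic_solution.moment_0_bound G_1
    by (blast intro: eq_0_if_abs_le_linear[OF \<open>0 < d\<close>])
  have m1: "abel_moment f g 1 = 0"
    using periodic abel_periodic_solution.moment_1_bound G_1 m0
    by (blast intro: eq_0_if_abs_le_linear[OF \<open>0 < d\<close>])
  have m2: "abel_moment f g 2 = 0"
    using periodic abel_periodic_solution.moment_2_bound G_1 m0 m1
    by (blast intro: eq_0_if_abs_le_linear[OF \<open>0 < d\<close>])
  show ?thesis
    using m0 m1 m2 by (simp add: abel_moment_def)
qed

end
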